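(* Let $X$ be a set, $T:X\to X$ a map, and $G$ a finite group acting on $X$ such that $g\circ T=T\circ g$ for all $g\in G$. Let $x\in X$ be a periodic point of $T$. Then the number of orbits that glue to $\mathfrak{O}_T(x)$ (including $\mathfrak{O}_T(x)$ itself) equals \[ \frac{|\mathfrak{O}_G(x)|}{|\mathfrak{O}_T(x)\cap\mathfrak{O}_G(x)|}. \]
   Context: For $x\in X$, $\mathfrak{O}_T(x)=\{T^j(x): j\geqslant 0\}$ is the (closed, i.e. finite) orbit of $x$ under $T$, and $\mathfrak{O}_G(x)=\{g(x):g\in G\}$ is the orbit of $x$ under $G$. Let $X'=G\backslash X$, $\pi:X\to X'$ the quotient map $\pi(x)=\mathfrak{O}_G(x)$, and $T':X'\to X'$ the induced map $T'(\mathfrak{O}_G(x))=\mathfrak{O}_G(T(x))$. The "orbits that glue to $\mathfrak{O}_T(x)$" are the distinct closed $T$-orbits $\mathfrak{O}_T(y)$, $y\in X$, which are mapped by $\pi$ onto the same $T'$-orbit as $\mathfrak{O}_T(x)$, i.e. with $\pi(\mathfrak{O}_T(y))=\pi(\mathfrak{O}_T(x))$. *)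

theory Defs
  imports Complex_Main "HOL-Algebra.Group_Action"
begin

definition T_orbit :: "('b \<Rightarrow> 'b) \<Rightarrow> 'b \<Rightarrow> 'b set" where
  "T_orbit T y = {(T ^^ j) y | j. True}"

definition periodic_pt :: "('b \<Rightarrow> 'b) \<Rightarrow> 'b \<Rightarrow> bool" where
  "periodic_pt T y \<longleftrightarrow> (\<exists>n>0. (T ^^ n) y = y)"

text \<open>Image of a set under the quotient map pi : X -> G\X, x |-> G-orbit of x.\<close>
definition quot_image :: "_ \<Rightarrow> ('a \<Rightarrow> 'b \<Rightarrow> 'b) \<Rightarrow> 'b set \<Rightarrow> 'b set set" where
  "quot_image G \<phi> S = (\<lambda>z. orbit G \<phi> z) ` S"

definition glued_orbits :: "_ \<Rightarrow> 'b set \<Rightarrow> ('a \<Rightarrow> 'b \<Rightarrow> 'b) \<Rightarrow> ('b \<Rightarrow> 'b) \<Rightarrow> 'b \<Rightarrow> 'b set set" where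
  "glued_orbits G E \<phi> T x =
     {T_orbit T y | y. y \<in> E \<and> periodic_pt T y \<and>
        quot_image G \<phi> (T_orbit T y) = quot_image G \<phi> (T_orbit T x)}"

end

theory Submission
  imports Defs
begin

text \<open>Since G commutes with T, every point gx of the G-orbit O of x is periodic and its
  T-orbit is g applied to the T-orbit of x; these T-orbits are exactly the glued orbits. The
  T-orbits of periodic points are disjoint or equal, so they cut O into blocks, and g maps the
  block of x bijectively onto the block of gx. Hence all blocks have the size of the T-orbit of x
  intersected with O, and |O| is that size times the number of glued orbits.\<close>

lemma card_eq_card_image_mult_uniform_blocks:
  assumes "finite S"
    and self_mem: "\<And>z. z \<in> S \<Longrightarrow> z \<in> f z"
    and block_eq: "\<And>z w. z \<in> S \<Longrightarrow> w \<in> S \<Longrightarrow> w \<in> f z \<Longrightarrow> f w = f z"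
    and block_card: "\<And>z. z \<in> S \<Longrightarrow> card (f z \<inter> S) = k"
  shows "card S = card (f ` S) * k"
proof -
  have disjoint: "c \<inter> S \<inter> (d \<inter> S) = {}"
    if "c \<in> f ` S" "d \<in> f ` S" and "c \<noteq> d" for c d
  proof (rule ccontr)
    obtain z w where "z \<in> S" "w \<in> S" and c: "c = f z" and d: "d = f w"
      using \<open>c \<in> f ` S\<close> \<open>d \<in> f ` S\<close> by blast
    assume "c \<inter> S \<inter> (d \<inter> S) \<noteq> {}"
    then obtain v where "v \<in> S" "v \<in> f z" "v \<in> f w"
      unfolding c d by blast
    then have "f z = f w"
      using block_eq \<open>z \<in> S\<close> \<open>w \<in> S\<close> by metis
    then show False
      using \<open>c \<noteq> d\<close> c d by simp
  qed
  have "(\<Union>c \<in> f ` S. c \<inter> S) = S"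
    using self_mem by blast
  moreover have "card (\<Union>c \<in> f ` S. c \<inter> S) = (\<Sum>c \<in> f ` S. card (c \<inter> S))"
    using assms(1) disjoint by (intro card_UN_disjoint) auto
  moreover have "(\<Sum>c \<in> f ` S. card (c \<inter> S)) = (\<Sum>c \<in> f ` S. k)"
    using block_card by (intro sum.cong) auto
  ultimately show ?thesis
    by simp
qed

lemma T_orbit_eq_range: "T_orbit T y = range (\<lambda>j. (T ^^ j) y)"
  unfolding T_orbit_def by blast

lemma T_orbit_self: "y \<in> T_orbit T y"
  unfolding T_orbit_def by (auto intro: exI[of _ 0])

lemma T_orbit_subset: "w \<in> T_orbit T z \<Longrightarrow> T_orbit T w \<subseteq> T_orbit T z"
  unfolding T_orbit_def by (auto simp flip: funpow_add) (metis funpow_add comp_apply)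

lemma periodic_pt_T_orbit_sym:
  assumes "periodic_pt T z" and "w \<in> T_orbit T z"
  shows "z \<in> T_orbit T w"
proof -
  obtain n where "n > 0" and period: "(T ^^ n) z = z"
    using assms(1) unfolding periodic_pt_def by blast
  obtain i where w: "w = (T ^^ i) z"
    using assms(2) unfolding T_orbit_def by blast
  have "i * n - i + i = i * n"
    using \<open>n > 0\<close> by simp
  then have "(T ^^ (i * n - i)) w = (T ^^ (i * n)) z"
    by (metis w funpow_add comp_apply)
  also have "\<dots> = ((T ^^ n) ^^ i) z"
    by (simp add: funpow_mult mult.commute)
  also have "\<dots> = z"
    using period by (induction i) simp_all
  finally show ?thesis
    unfolding T_orbit_def by (auto intro: sym)
qed

lemma T_orbit_eq_if_periodic_pt:
  "periodic_pt T z \<Longrightarrow> w \<in> T_orbit T z \<Longrightarrow> T_orbit T w = T_orbit T z"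
  using T_orbit_subset periodic_pt_T_orbit_sym by (metis subset_antisym)

lemma orbitE:
  assumes "z \<in> orbit G \<phi> y"
  obtains g where "g \<in> carrier G" and "z = \<phi> g y"
  using assms unfolding orbit_def by blast

context group_action
begin

lemma orbit_eq_image: "orbit G \<phi> y = (\<lambda>h. \<phi> h y) ` carrier G"
  unfolding orbit_def by auto

lemma orbit_subset_carrier: "y \<in> E \<Longrightarrow> orbit G \<phi> y \<subseteq> E"
  unfolding orbit_def using element_image by blast

lemma orbit_action_subset:
  assumes "g \<in> carrier G" and "y \<in> E"
  shows "orbit G \<phi> (\<phi> g y) \<subseteq> orbit G \<phi> y"
proof
  interpret group G
    using group_hom group_hom.axioms(1) by auto
  fix z assume "z \<in> orbit G \<phi> (\<phi> g y)"
  then obtain h where h: "h \<in> carrier G" and "z = \<phi> h (\<phi> g y)"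
    by (rule orbitE)
  then have "z = \<phi> (h \<otimes> g) y"
    using assms by (simp add: composition_rule)
  then show "z \<in> orbit G \<phi> y"
    using h assms(1) unfolding orbit_def by blast
qed

lemma orbit_action:
  assumes "g \<in> carrier G" and "y \<in> E"
  shows "orbit G \<phi> (\<phi> g y) = orbit G \<phi> y"
proof
  interpret group G
    using group_hom group_hom.axioms(1) by auto
  have "\<phi> g y \<in> E"
    using assms by (rule element_image) (rule refl)
  moreover have "\<phi> (inv g) (\<phi> g y) = y"
    using assms by (rule orbit_sym_aux) (rule refl)
  ultimately show "orbit G \<phi> y \<subseteq> orbit G \<phi> (\<phi> g y)"
    using orbit_action_subset[of "inv g" "\<phi> g y"] assms(1) by simp
qed (rule orbit_action_subset[OF assms])

lemma action_mem_orbit: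
  assumes "g \<in> carrier G" and "y \<in> E" and "w \<in> orbit G \<phi> y"
  shows "\<phi> g w \<in> orbit G \<phi> y"
proof -
  obtain h where "h \<in> carrier G" and w: "w = \<phi> h y"
    using assms(3) by (rule orbitE)
  then have "orbit G \<phi> w = orbit G \<phi> y"
    using assms(2) by (simp add: orbit_action)
  moreover have "\<phi> g w \<in> orbit G \<phi> w"
    using assms(1) unfolding orbit_def by blast
  ultimately show ?thesis
    by simp
qed

lemma image_orbit:
  assumes "g \<in> carrier G" and "y \<in> E"
  shows "\<phi> g ` orbit G \<phi> y = orbit G \<phi> y"
proof
  interpret group G
    using group_hom group_hom.axioms(1) by auto
  show "\<phi> g ` orbit G \<phi> y \<subseteq> orbit G \<phi> y"
    using assms action_mem_orbit by blast
  show "orbit G \<phi> y \<subseteq> \<phi> g ` orbit G \<phi> y"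
  proof
    fix w assume w: "w \<in> orbit G \<phi> y"
    then have "w \<in> E"
      using assms(2) orbit_subset_carrier by blast
    then have "w = \<phi> g (\<phi> (inv g) w)"
      using assms(1) orbit_sym_aux by (metis inv_closed inv_inv)
    moreover have "\<phi> (inv g) w \<in> orbit G \<phi> y"
      using assms w by (simp add: action_mem_orbit)
    ultimately show "w \<in> \<phi> g ` orbit G \<phi> y"
      by blast
  qed
qed

end

locale equivariant_map = group_action +
  fixes T
  assumes maps_to: "T ` E \<subseteq> E"
    and commute: "\<And>g y. g \<in> carrier G \<Longrightarrow> y \<in> E \<Longrightarrow> \<phi> g (T y) = T (\<phi> g y)"
begin

lemma funpow_closed: "y \<in> E \<Longrightarrow> (T ^^ j) y \<in> E"
  using maps_to by (induction j) auto

lemma T_orbit_subset_carrier: "y \<in> E \<Longrightarrow> T_orbit T y \<subseteq> E"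
  unfolding T_orbit_def using funpow_closed by blast

lemma funpow_commute:
  "g \<in> carrier G \<Longrightarrow> y \<in> E \<Longrightarrow> \<phi> g ((T ^^ j) y) = (T ^^ j) (\<phi> g y)"
  by (induction j) (simp_all add: commute funpow_closed)

lemma T_orbit_action:
  "g \<in> carrier G \<Longrightarrow> y \<in> E \<Longrightarrow> T_orbit T (\<phi> g y) = \<phi> g ` T_orbit T y"
  unfolding T_orbit_eq_range image_image by (simp add: funpow_commute)

lemma periodic_pt_action:
  "g \<in> carrier G \<Longrightarrow> y \<in> E \<Longrightarrow> periodic_pt T y \<Longrightarrow> periodic_pt T (\<phi> g y)"
  unfolding periodic_pt_def by (metis funpow_commute)

lemma quot_image_T_orbit_action:
  assumes "g \<in> carrier G" and "y \<in> E"
  shows "quot_image G \<phi> (T_orbit T (\<phi> g y)) = quot_image G \<phi> (T_orbit T y)"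
proof -
  have "orbit G \<phi> (\<phi> g z) = orbit G \<phi> z" if "z \<in> T_orbit T y" for z
    using that assms T_orbit_subset_carrier orbit_action by blast
  then show ?thesis
    unfolding quot_image_def T_orbit_action[OF assms] image_image by (rule image_cong[OF refl])
qed

lemma glued_orbits_eq:
  assumes "x \<in> E" and "periodic_pt T x"
  shows "glued_orbits G E \<phi> T x = T_orbit T ` orbit G \<phi> x"
proof (intro equalityI subsetI)
  fix c assume "c \<in> glued_orbits G E \<phi> T x"
  then obtain y where c: "c = T_orbit T y" and "y \<in> E"
    and quot: "quot_image G \<phi> (T_orbit T y) = quot_image G \<phi> (T_orbit T x)"
    unfolding glued_orbits_def by blast
  have "orbit G \<phi> y \<in> quot_image G \<phi> (T_orbit T y)"
    unfolding quot_image_def by (rule imageI[OF T_orbit_self])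
  then have "orbit G \<phi> y \<in> quot_image G \<phi> (T_orbit T x)"
    by (simp only: quot)
  then obtain j where "orbit G \<phi> y = orbit G \<phi> ((T ^^ j) x)"
    unfolding T_orbit_eq_range quot_image_def image_image by blast
  then have "y \<in> orbit G \<phi> ((T ^^ j) x)"
    using orbit_refl[OF \<open>y \<in> E\<close>] by simp
  then obtain g where g: "g \<in> carrier G" and "y = \<phi> g ((T ^^ j) x)"
    by (rule orbitE)
  then have "y \<in> T_orbit T (\<phi> g x)"
    using assms(1) by (simp add: funpow_commute T_orbit_eq_range)
  then have "c = T_orbit T (\<phi> g x)"
    unfolding c by (rule T_orbit_eq_if_periodic_pt[OF periodic_pt_action[OF g assms]])
  moreover have "\<phi> g x \<in> orbit G \<phi> x"
    using g unfolding orbit_eq_image by blast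
  ultimately show "c \<in> T_orbit T ` orbit G \<phi> x"
    by blast
next
  fix c assume "c \<in> T_orbit T ` orbit G \<phi> x"
  then obtain z where z: "z \<in> orbit G \<phi> x" and c: "c = T_orbit T z"
    by blast
  from z obtain g where g: "g \<in> carrier G" and z_eq: "z = \<phi> g x"
    by (rule orbitE)
  have "\<phi> g x \<in> E"
    using g assms(1) by (rule element_image) (rule refl)
  moreover have "periodic_pt T (\<phi> g x)"
    using g assms by (rule periodic_pt_action)
  moreover have "quot_image G \<phi> (T_orbit T (\<phi> g x)) = quot_image G \<phi> (T_orbit T x)"
    using g assms(1) by (rule quot_image_T_orbit_action)
  ultimately show "c \<in> glued_orbits G E \<phi> T x"
    unfolding glued_orbits_def c z_eq by blast
qed

lemma card_T_orbit_inter_orbit_action: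
  assumes "g \<in> carrier G" and "x \<in> E"
  shows "card (T_orbit T (\<phi> g x) \<inter> orbit G \<phi> x) = card (T_orbit T x \<inter> orbit G \<phi> x)"
proof -
  have "orbit G \<phi> x \<subseteq> E"
    using assms(2) by (rule orbit_subset_carrier)
  then have "\<phi> g ` (T_orbit T x \<inter> orbit G \<phi> x) = \<phi> g ` T_orbit T x \<inter> \<phi> g ` orbit G \<phi> x"
    by (rule inj_on_image_Int[OF inj_prop[OF assms(1)] T_orbit_subset_carrier[OF assms(2)]])
  also have "\<dots> = T_orbit T (\<phi> g x) \<inter> orbit G \<phi> x"
    using assms by (simp add: T_orbit_action image_orbit)
  finally have image_eq: "\<phi> g ` (T_orbit T x \<inter> orbit G \<phi> x) = T_orbit T (\<phi> g x) \<inter> orbit G \<phi> x" .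
  have "inj_on (\<phi> g) (T_orbit T x \<inter> orbit G \<phi> x)"
    by (rule inj_on_subset[OF inj_prop[OF assms(1)]]) (use T_orbit_subset_carrier[OF assms(2)] in blast)
  from card_image[OF this] show ?thesis
    by (simp only: image_eq)
qed

lemma card_orbit_eq_card_glued_orbits_mult:
  assumes "finite (carrier G)" and "x \<in> E" and "periodic_pt T x"
  shows "card (orbit G \<phi> x) = card (glued_orbits G E \<phi> T x) * card (T_orbit T x \<inter> orbit G \<phi> x)"
proof -
  have periodic: "periodic_pt T z" if z: "z \<in> orbit G \<phi> x" for z
  proof -
    obtain g where "g \<in> carrier G" and "z = \<phi> g x"
      using z by (rule orbitE)
    then show ?thesis
      using assms(2,3) by (simp add: periodic_pt_action)
  qed
  have "card (orbit G \<phi> x) = card (T_orbit T ` orbit G \<phi> x) * card (T_orbit T x \<inter> orbit G \<phi> x)"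
  proof (rule card_eq_card_image_mult_uniform_blocks)
    show "finite (orbit G \<phi> x)"
      using assms(1) by (simp add: orbit_eq_image)
    show "z \<in> T_orbit T z" for z
      by (rule T_orbit_self)
    show "T_orbit T w = T_orbit T z"
      if "z \<in> orbit G \<phi> x" "w \<in> orbit G \<phi> x" "w \<in> T_orbit T z" for z w
      using periodic[OF that(1)] that(3) by (rule T_orbit_eq_if_periodic_pt)
    show "card (T_orbit T z \<inter> orbit G \<phi> x) = card (T_orbit T x \<inter> orbit G \<phi> x)"
      if z: "z \<in> orbit G \<phi> x" for z
    proof -
      obtain g where "g \<in> carrier G" and "z = \<phi> g x"
        using z by (rule orbitE)
      then show ?thesis
        using assms(2) by (simp add: card_T_orbit_inter_orbit_action)
    qed
  qed
  then show ?thesis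
    using assms(2,3) by (simp add: glued_orbits_eq)
qed

end

theorem lemma5:
  fixes G (structure) and E :: "'b set" and \<phi> :: "'a \<Rightarrow> 'b \<Rightarrow> 'b" and T :: "'b \<Rightarrow> 'b"
  assumes "group_action G E \<phi>"
    and "finite (carrier G)"
    and "T ` E \<subseteq> E"
    and "\<forall>g \<in> carrier G. \<forall>y \<in> E. \<phi> g (T y) = T (\<phi> g y)"
    and "x \<in> E"
    and "periodic_pt T x"
  shows "real (card (glued_orbits G E \<phi> T x)) =
         real (card (orbit G \<phi> x)) / real (card (T_orbit T x \<inter> orbit G \<phi> x))"
proof -
  interpret equivariant_map G E \<phi> T
    using assms(1,3,4) by (simp add: equivariant_map_def equivariant_map_axioms_def)
  have "x \<in> T_orbit T x \<inter> orbit G \<phi> x"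
    by (simp add: T_orbit_self orbit_refl[OF assms(5)])
  moreover have "finite (T_orbit T x \<inter> orbit G \<phi> x)"
    using assms(2) by (simp add: orbit_eq_image)
  ultimately have "card (T_orbit T x \<inter> orbit G \<phi> x) > 0"
    by (auto simp: card_gt_0_iff)
  then show ?thesis
    by (simp add: card_orbit_eq_card_glued_orbits_mult[OF assms(2,5,6)])
qed

end
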